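(* There exists a (non-linear) kernel $g$ of dimension $16$ whose partial distance sequence is $(D_{min}^{(0)},\dots,D_{min}^{(15)})=(1,2,2,2,2,4,4,4,6,6,6,8,8,8,8,16)$; consequently $E_{16}\ge E(g)=\frac1{16}\sum_{i=0}^{15}\log_{16}D_{min}^{(i)}\approx0.52742$.
   Context: A kernel of dimension $\ell$ is a bijection $g:\{0,1\}^\ell\to\{0,1\}^\ell$. ${\bf a}\bullet{\bf b}$ denotes concatenation, $d_H$ Hamming distance. Partial distances: $D_{min}^{(i)}=\min\{d_H(g({\bf w}\bullet 0\bullet{\bf u}),g({\bf w}\bullet 1\bullet {\bf v})) : {\bf w}\in\{0,1\}^i,\ {\bf u},{\bf v}\in\{0,1\}^{\ell-i-1}\}$, $i=0,\dots,\ell-1$; exponent $E(g)=\frac1\ell\sum_{i=0}^{\ell-1}\log_\ell D_{min}^{(i)}$; $E_\ell=\max_g E(g)$ over all kernels of dimension $\ell$. *)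

theory Defs
  imports Complex_Main
begin

text \<open>Binary vectors of length l are modelled as bool lists of length l;
  concatenation is list append.\<close>

definition bvecs :: "nat \<Rightarrow> bool list set" where
  "bvecs l = {xs. length xs = l}"

definition hamming :: "bool list \<Rightarrow> bool list \<Rightarrow> nat" where
  "hamming xs ys = card {j. j < length xs \<and> xs ! j \<noteq> ys ! j}"

definition kernel :: "nat \<Rightarrow> (bool list \<Rightarrow> bool list) \<Rightarrow> bool" where
  "kernel l g \<longleftrightarrow> bij_betw g (bvecs l) (bvecs l)"

definition Dmin :: "nat \<Rightarrow> (bool list \<Rightarrow> bool list) \<Rightarrow> nat \<Rightarrow> nat" where
  "Dmin l g i = Min {hamming (g (w @ [False] @ u)) (g (w @ [True] @ v)) | w u v.
      w \<in> bvecs i \<and> u \<in> bvecs (l - i - 1) \<and> v \<in> bvecs (l - i - 1)}"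

definition exponent :: "nat \<Rightarrow> (bool list \<Rightarrow> bool list) \<Rightarrow> real" where
  "exponent l g = (1 / real l) * (\<Sum>i<l. log (real l) (real (Dmin l g i)))"

definition best_exponent :: "nat \<Rightarrow> real" where
  "best_exponent l = Max {exponent l g | g. kernel l g}"

definition linear_kernel :: "nat \<Rightarrow> (bool list \<Rightarrow> bool list) \<Rightarrow> bool" where
  "linear_kernel l g \<longleftrightarrow> (\<forall>x\<in>bvecs l. \<forall>y\<in>bvecs l.
      g (map2 (\<noteq>) x y) = map2 (\<noteq>) (g x) (g y))"

end

theory Submission
  imports Defs "HOL-Library.FuncSet"
begin

(* The kernel g of dimension 16 is a Gray image of a Z4-linear map.  Read the 16 input bits as
   eight Z4-symbols s_k = x_p + 2 x_(p+4), p = 0,1,2,3,8,9,10,11; multiply the symbol vector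
   by a fixed invertible 8x8 matrix B over Z4; output the Gray images of the eight resulting
   symbols.  Since the Gray map is an isometry from Lee distance on Z4 to Hamming distance, the
   distance of g(x) and g(y) is the Lee weight of (s(x) - s(y)) B.  For a prefix length i the
   possible symbol differences s(w0u) - s(w1v) range over a product of explicit subsets of Z4,
   so each partial distance is a finite minimisation over Z4-vectors.  Lower bounds for the partial distances
   are certified by two checkable criteria (exhaustive enumeration, or pulling low-weight
   vectors back through the inverse C of B); they are evaluated together with explicit minimising
   witnesses.  The theorem then follows, together with the numerical value of the exponent,
   which rests on the bounds 1054/665 < log2 3 < 485/306. *)

lemma hamming_conv:
  "length xs = length ys \<Longrightarrow> hamming xs ys = length (filter (\<lambda>(a, b). a \<noteq> b) (zip xs ys))"
  unfolding hamming_def length_filter_conv_card by (auto intro!: arg_cong[where f = card])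

lemma hamming_append:
  "length a = length c \<Longrightarrow> length b = length d \<Longrightarrow> hamming (a @ b) (c @ d) = hamming a c + hamming b d"
  by (simp add: hamming_conv)

lemma hamming_le_length: "hamming xs ys \<le> length xs"
proof -
  have "hamming xs ys \<le> card {..<length xs}" unfolding hamming_def by (rule card_mono) auto
  then show ?thesis by simp
qed

lemma hamming_self [simp]: "hamming xs xs = 0"
  by (simp add: hamming_def)

lemma finite_bvecs: "finite (bvecs n)"
proof -
  have "bvecs n = {xs. set xs \<subseteq> (UNIV :: bool set) \<and> length xs = n}" by (auto simp: bvecs_def)
  then show ?thesis using finite_lists_length_eq[of "UNIV :: bool set" n] by simp
qed

lemma first_difference:
  "length x = length y \<Longrightarrow> x \<noteq> y \<Longrightarrow>
   \<exists>w a u v. x = w @ [a] @ u \<and> y = w @ [\<not> a] @ v \<and> length u = length v"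
proof (induction x arbitrary: y)
  case Nil then show ?case by simp
next
  case (Cons b x)
  then obtain c y' where y: "y = c # y'" by (cases y) auto
  show ?case
  proof (cases "b = c")
    case True
    then have "x \<noteq> y'" "length x = length y'" using Cons.prems y by auto
    then obtain w a u v where "x = w @ [a] @ u" "y' = w @ [\<not> a] @ v" "length u = length v"
      using Cons.IH by blast
    then show ?thesis using y True by (intro exI[of _ "b # w"]) auto
  next
    case False
    then show ?thesis using y Cons.prems by (intro exI[of _ "[]"]) auto
  qed
qed

text \<open>A length-preserving map all of whose partial distances are positive is a kernel:
  positivity separates any two words at their first difference, and an injective
  self-map of a finite set is bijective.\<close>
lemma kernel_if_partial_distances_positive:
  assumes maps: "g ` bvecs l \<subseteq> bvecs l"
    and pos: "\<And>w u v. length w < l \<Longrightarrow> length u = l - length w - 1 \<Longrightarrow> length v = l - length w - 1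
               \<Longrightarrow> 0 < hamming (g (w @ [False] @ u)) (g (w @ [True] @ v))"
  shows "kernel l g"
proof -
  have "inj_on g (bvecs l)"
  proof (rule inj_onI, rule ccontr)
    fix x y assume x: "x \<in> bvecs l" and y: "y \<in> bvecs l" and eq: "g x = g y" and "x \<noteq> y"
    then obtain w a u v where split: "x = w @ [a] @ u" "y = w @ [\<not> a] @ v" "length u = length v"
      using first_difference[of x y] by (auto simp: bvecs_def)
    have lens: "length w < l" "length u = l - length w - 1" "length v = l - length w - 1"
      using x split by (auto simp: bvecs_def)
    show False
      using pos[OF lens] pos[OF lens(1,3,2)] eq split by (cases a) auto
  qed
  moreover from this have "g ` bvecs l = bvecs l" by (rule endo_inj_surj[OF finite_bvecs maps])
  ultimately show ?thesis unfolding kernel_def bij_betw_def by simp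
qed

lemma Dmin_eqI:
  assumes maps: "g ` bvecs l \<subseteq> bvecs l" and "i < l"
    and lower: "\<And>w u v. length w = i \<Longrightarrow> length u = l - i - 1 \<Longrightarrow> length v = l - i - 1
                 \<Longrightarrow> D \<le> hamming (g (w @ [False] @ u)) (g (w @ [True] @ v))"
    and attained: "length w = i" "length u = l - i - 1" "length v = l - i - 1"
      "hamming (g (w @ [False] @ u)) (g (w @ [True] @ v)) = D"
  shows "Dmin l g i = D"
proof -
  let ?S = "{hamming (g (w @ [False] @ u)) (g (w @ [True] @ v)) | w u v.
      w \<in> bvecs i \<and> u \<in> bvecs (l - i - 1) \<and> v \<in> bvecs (l - i - 1)}"
  have "length (g x) = l" if "length x = l" for x
    using maps that by (auto simp: bvecs_def)
  then have "?S \<subseteq> {..l}"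
    using \<open>i < l\<close> by (auto intro: order.trans[OF hamming_le_length] simp: bvecs_def)
  then have "finite ?S" by (rule finite_subset) simp
  moreover have "D \<in> ?S" using attained unfolding bvecs_def by force
  ultimately show ?thesis
    unfolding Dmin_def using lower by (intro Min_eqI) (auto simp: bvecs_def)
qed

lemma Dmin_le_dimension:
  assumes k: "kernel l h" and "i < l"
  shows "Dmin l h i \<le> l"
proof -
  let ?S = "{hamming (h (w @ [False] @ u)) (h (w @ [True] @ v)) | w u v.
      w \<in> bvecs i \<and> u \<in> bvecs (l - i - 1) \<and> v \<in> bvecs (l - i - 1)}"
  have len: "length (h x) = l" if "length x = l" for x
    using k that unfolding kernel_def bij_betw_def bvecs_def by auto
  have sub: "?S \<subseteq> {..l}"
    using \<open>i < l\<close> by (auto intro: order.trans[OF hamming_le_length] simp: len bvecs_def)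
  let ?e = "hamming (h (replicate i False @ [False] @ replicate (l - i - 1) False))
                    (h (replicate i False @ [True] @ replicate (l - i - 1) False))"
  have mem: "?e \<in> ?S" unfolding bvecs_def by force
  have "Dmin l h i \<le> ?e" unfolding Dmin_def by (rule Min_le[OF finite_subset[OF sub] mem]) simp
  also have "?e \<le> l" using sub mem by auto
  finally show ?thesis .
qed

text \<open>Partial distances of a kernel take values in {0..l}, so only finitely many exponents
  occur and the maximum E_l is attained; in particular it bounds every E(g).\<close>
lemma finite_exponents: "finite {exponent l g | g. kernel l g}"
proof -
  let ?F = "\<lambda>D :: nat \<Rightarrow> nat. (1 / real l) * (\<Sum>i<l. log (real l) (real (D i)))"
  have "{exponent l g | g. kernel l g} \<subseteq> ?F ` (PiE {..<l} (\<lambda>_. {..l}))"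
  proof
    fix x assume "x \<in> {exponent l g | g. kernel l g}"
    then obtain h where h: "kernel l h" "x = exponent l h" by blast
    have "x = ?F (restrict (Dmin l h) {..<l})"
      unfolding h(2) exponent_def by (intro arg_cong[where f = "\<lambda>t. (1 / real l) * t"] sum.cong) auto
    moreover have "restrict (Dmin l h) {..<l} \<in> PiE {..<l} (\<lambda>_. {..l})"
      using Dmin_le_dimension[OF h(1)] by (auto simp: restrict_PiE_iff)
    ultimately show "x \<in> ?F ` (PiE {..<l} (\<lambda>_. {..l}))" by blast
  qed
  moreover have "finite (?F ` (PiE {..<l} (\<lambda>_. {..l})))" by (intro finite_imageI finite_PiE) auto
  ultimately show ?thesis using finite_subset by blast
qed

lemma exponent_le_best_exponent: "kernel l g \<Longrightarrow> exponent l g \<le> best_exponent l"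
  unfolding best_exponent_def by (rule Max_ge[OF finite_exponents]) blast

section \<open>Lee weight on Z4 and the Gray map\<close>

text \<open>Elements of Z4 are represented by integers modulo 4.\<close>
definition lee :: "int \<Rightarrow> nat" where
  "lee x = (let y = x mod 4 in if y = 0 then 0 else if y = 2 then 2 else 1)"

definition lee_weight :: "int list \<Rightarrow> nat" where
  "lee_weight v = sum_list (map lee v)"

definition gray :: "int \<Rightarrow> bool list" where
  "gray x = (let y = x mod 4 in if y = 0 then [False, False] else if y = 1 then [False, True]
     else if y = 2 then [True, True] else [True, False])"

lemma length_gray [simp]: "length (gray x) = 2"
  by (simp add: gray_def Let_def)

lemma lee_mod [simp]: "lee (a mod 4) = lee a"
  by (simp add: lee_def)

lemma lee_eq_0_iff: "lee a = 0 \<longleftrightarrow> a mod 4 = 0"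
  by (simp add: lee_def Let_def)

lemma lee_eq_1: "lee a = 1 \<Longrightarrow> a mod 4 = 1 \<or> a mod 4 = 3"
proof -
  assume "lee a = 1"
  moreover have "0 \<le> a mod 4" "a mod 4 < 4" by simp_all
  ultimately show ?thesis by (simp add: lee_def Let_def split: if_splits) arith
qed

lemma lee_weight_conv_sum: "lee_weight z = (\<Sum>k<length z. lee (z ! k))"
  by (simp add: lee_weight_def sum_list_sum_nth atLeast0LessThan)

lemma hamming_gray: "hamming (gray a) (gray b) = lee (a - b)"
proof -
  have lee_diff: "lee (a - b) = lee (a mod 4 - b mod 4)" unfolding lee_def by (simp add: mod_diff_eq)
  have "gray a = gray (a mod 4)" "gray b = gray (b mod 4)" unfolding gray_def by simp_all
  moreover have "a mod 4 \<in> {0, 1, 2, 3}" "b mod 4 \<in> {0, 1, 2, 3}" by auto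
  ultimately show ?thesis unfolding lee_diff
    by (auto simp: hamming_conv gray_def lee_def)
qed

section \<open>Vectors and matrices over Z4\<close>

definition vadd :: "int list \<Rightarrow> int list \<Rightarrow> int list" where
  "vadd u v = map2 (+) u v"

definition vsub :: "int list \<Rightarrow> int list \<Rightarrow> int list" where
  "vsub u v = map2 (-) u v"

definition m4 :: "int list \<Rightarrow> int list" where
  "m4 v = map (\<lambda>a. a mod 4) v"

text \<open>Row vector times matrix (given as its list of rows of length n).\<close>
fun vmul :: "nat \<Rightarrow> int list \<Rightarrow> int list list \<Rightarrow> int list" where
  "vmul n (x # xs) (r # rs) = vadd (map ((*) x) r) (vmul n xs rs)"
| "vmul n _ _ = replicate n 0"

definition rows :: "nat \<Rightarrow> int list list \<Rightarrow> bool" where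
  "rows n M \<longleftrightarrow> (\<forall>r\<in>set M. length r = n)"

lemma rows_simps [simp]: "rows n []" "rows n (r # rs) \<longleftrightarrow> length r = n \<and> rows n rs"
  by (simp_all add: rows_def)

lemma length_vadd [simp]: "length (vadd u v) = min (length u) (length v)"
  by (simp add: vadd_def)

lemma length_vsub [simp]: "length (vsub u v) = min (length u) (length v)"
  by (simp add: vsub_def)

lemma length_m4 [simp]: "length (m4 u) = length u"
  by (simp add: m4_def)

lemma nth_vadd [simp]: "j < length u \<Longrightarrow> j < length v \<Longrightarrow> vadd u v ! j = u ! j + v ! j"
  by (simp add: vadd_def)

lemma nth_vsub [simp]: "j < length u \<Longrightarrow> j < length v \<Longrightarrow> vsub u v ! j = u ! j - v ! j"
  by (simp add: vsub_def)

lemma nth_m4 [simp]: "j < length u \<Longrightarrow> m4 u ! j = u ! j mod 4"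
  by (simp add: m4_def)

lemma length_vmul [simp]: "rows n M \<Longrightarrow> length (vmul n d M) = n"
  by (induction n d M rule: vmul.induct) auto

lemma vadd_assoc: "vadd (vadd a b) c = vadd a (vadd b c)"
  by (auto intro!: nth_equalityI simp: algebra_simps)

lemma vadd_zero_right: "length a = n \<Longrightarrow> vadd a (replicate n 0) = a"
  by (auto intro!: nth_equalityI)

lemma vadd_zero_left: "length a = n \<Longrightarrow> vadd (replicate n 0) a = a"
  by (auto intro!: nth_equalityI)

lemma lee_weight_m4 [simp]: "lee_weight (m4 v) = lee_weight v"
  by (simp add: lee_weight_def m4_def comp_def)

lemma length_concat_gray [simp]: "length (concat (map gray u)) = 2 * length u"
  by (induction u) auto

lemma hamming_concat_gray:
  "length u = length v \<Longrightarrow>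
   hamming (concat (map gray u)) (concat (map gray v)) = lee_weight (vsub u v)"
proof (induction u arbitrary: v)
  case Nil then show ?case by (simp add: hamming_def lee_weight_def vsub_def)
next
  case (Cons a u)
  then obtain b v' where "v = b # v'" by (cases v) auto
  with Cons show ?case by (simp add: hamming_append hamming_gray lee_weight_def vsub_def)
qed

lemma vmul_zero: "rows n N \<Longrightarrow> vmul n (replicate m 0) N = replicate n 0"
proof (induction m arbitrary: N)
  case 0 then show ?case by simp
next
  case (Suc m) then show ?case by (cases N) (auto intro!: nth_equalityI)
qed

lemma vmul_add:
  "length a = length b \<Longrightarrow> rows n N \<Longrightarrow> vmul n (vadd a b) N = vadd (vmul n a N) (vmul n b N)"
proof (induction a arbitrary: b N)
  case Nil then show ?case by (auto simp: vadd_def intro!: nth_equalityI)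
next
  case (Cons x a)
  then obtain y b' where b: "b = y # b'" by (cases b) auto
  show ?case
  proof (cases N)
    case Nil then show ?thesis using b by (auto intro!: nth_equalityI)
  next
    case (Cons r rs)
    have "vmul n (vadd a b') rs = vadd (vmul n a rs) (vmul n b' rs)"
      using Cons.IH[of b' rs] Cons.prems b \<open>N = r # rs\<close> by simp
    moreover have "vadd (x # a) (y # b') = (x + y) # vadd a b'" by (simp add: vadd_def)
    ultimately show ?thesis using b \<open>N = r # rs\<close> Cons.prems
      by (auto simp: algebra_simps intro!: nth_equalityI)
  qed
qed

lemma vmul_scale: "rows n N \<Longrightarrow> vmul n (map ((*) x) a) N = map ((*) x) (vmul n a N)"
proof (induction a arbitrary: N)
  case Nil then show ?case by (auto intro!: nth_equalityI)
next
  case (Cons y a) then show ?case by (cases N) (auto simp: algebra_simps intro!: nth_equalityI)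
qed

lemma vmul_sub:
  "length a = length b \<Longrightarrow> rows n N \<Longrightarrow> vmul n (vsub a b) N = vsub (vmul n a N) (vmul n b N)"
proof (induction a arbitrary: b N)
  case Nil then show ?case by (auto simp: vsub_def intro!: nth_equalityI)
next
  case (Cons x a)
  then obtain y b' where b: "b = y # b'" by (cases b) auto
  show ?case
  proof (cases N)
    case Nil then show ?thesis using b by (auto simp: vsub_def intro!: nth_equalityI)
  next
    case (Cons r rs)
    have "vmul n (vsub a b') rs = vsub (vmul n a rs) (vmul n b' rs)"
      using Cons.IH[of b' rs] Cons.prems b \<open>N = r # rs\<close> by simp
    moreover have "vsub (x # a) (y # b') = (x - y) # vsub a b'" by (simp add: vsub_def)
    ultimately show ?thesis using b \<open>N = r # rs\<close> Cons.prems
      by (auto simp: algebra_simps intro!: nth_equalityI)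
  qed
qed

lemma vmul_assoc:
  "rows m M \<Longrightarrow> rows n N \<Longrightarrow> vmul n (vmul m d M) N = vmul n d (map (\<lambda>r. vmul n r N) M)"
proof (induction m d M rule: vmul.induct)
  case (1 m x xs r rs)
  then have "vmul n (vmul m (x # xs) (r # rs)) N
      = vadd (map ((*) x) (vmul n r N)) (vmul n (vmul m xs rs) N)"
    by (simp add: vmul_add vmul_scale)
  with 1 show ?case by simp
qed (simp_all add: vmul_zero)

lemma m4_vadd_left: "m4 (vadd (m4 a) b) = m4 (vadd a b)"
  by (auto intro!: nth_equalityI simp: mod_add_left_eq)

lemma m4_vadd_right: "m4 (vadd a (m4 b)) = m4 (vadd a b)"
  by (auto intro!: nth_equalityI simp: mod_add_right_eq)

lemma m4_vmul_vector: "m4 (vmul n (m4 d) M) = m4 (vmul n d M)"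
proof (induction n d M rule: vmul.induct)
  case (1 n x xs r rs)
  have "m4 (vmul n (m4 (x # xs)) (r # rs)) = m4 (vadd (map ((*) (x mod 4)) r) (vmul n (m4 xs) rs))"
    by (simp add: m4_def)
  also have "\<dots> = m4 (vadd (m4 (map ((*) (x mod 4)) r)) (m4 (vmul n (m4 xs) rs)))"
    by (simp add: m4_vadd_left m4_vadd_right)
  also have "\<dots> = m4 (vadd (m4 (map ((*) x) r)) (m4 (vmul n xs rs)))"
    using 1 by (auto intro!: nth_equalityI arg_cong[where f = m4] simp: mod_mult_left_eq)
  also have "\<dots> = m4 (vmul n (x # xs) (r # rs))"
    by (simp add: m4_vadd_left m4_vadd_right)
  finally show ?case .
qed (simp_all add: m4_def)

lemma m4_vmul_matrix: "m4 (vmul n d (map m4 M)) = m4 (vmul n d M)"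
proof (induction n d M rule: vmul.induct)
  case (1 n x xs r rs)
  have "m4 (vmul n (x # xs) (map m4 (r # rs)))
      = m4 (vadd (m4 (map ((*) x) (m4 r))) (m4 (vmul n xs (map m4 rs))))"
    by (simp add: m4_vadd_left m4_vadd_right)
  also have "\<dots> = m4 (vadd (m4 (map ((*) x) r)) (m4 (vmul n xs rs)))"
    using 1 by (auto intro!: nth_equalityI arg_cong[where f = m4] simp: mod_mult_right_eq)
  also have "\<dots> = m4 (vmul n (x # xs) (r # rs))"
    by (simp add: m4_vadd_left m4_vadd_right)
  finally show ?case .
qed (simp_all add: m4_def)

definition lee_ball1 :: "nat \<Rightarrow> int list list" where
  "lee_ball1 n = replicate n 0 # [(replicate n 0)[j := c]. j \<leftarrow> [0..<n], c \<leftarrow> [1, 3]]"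

lemma m4_lee_weight_0: "lee_weight z = 0 \<Longrightarrow> m4 z = replicate (length z) 0"
  by (auto intro!: nth_equalityI simp: lee_weight_conv_sum lee_eq_0_iff)

lemma m4_in_lee_ball1:
  assumes "lee_weight z \<le> 1"
  shows "m4 z \<in> set (lee_ball1 (length z))"
proof (cases "lee_weight z = 0")
  case True
  then show ?thesis by (simp add: m4_lee_weight_0 lee_ball1_def)
next
  case False
  then obtain j where j: "j < length z" "lee (z ! j) \<noteq> 0" by (auto simp: lee_weight_conv_sum)
  have single: "lee (z ! j) + (\<Sum>k\<in>{..<length z} - {j}. lee (z ! k)) = lee_weight z"
    using j by (simp add: lee_weight_conv_sum sum.remove)
  then have "lee (z ! j) = 1" using assms j by linarith
  then have "z ! j mod 4 = 1 \<or> z ! j mod 4 = 3" by (rule lee_eq_1)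
  moreover have "lee (z ! k) = 0" if "k < length z" "k \<noteq> j" for k
    using single assms j that member_le_sum[of k "{..<length z} - {j}" "\<lambda>k. lee (z ! k)"] by simp
  then have "m4 z = (replicate (length z) 0)[j := z ! j mod 4]"
    using j(1) by (intro nth_equalityI) (auto simp: lee_eq_0_iff nth_list_update)
  ultimately show ?thesis using j by (auto simp: lee_ball1_def)
qed

definition B :: "int list list" where
  "B = [[0, 2, 3, 1, 2, 0, 3, 0], [2, 0, 3, 1, 0, 1, 2, 1], [3, 3, 2, 2, 1, 1, 1, 1],
        [1, 1, 0, 3, 1, 3, 1, 2], [3, 0, 1, 3, 2, 3, 0, 0], [2, 3, 0, 3, 3, 1, 0, 0],
        [1, 3, 0, 1, 0, 2, 0, 1], [1, 3, 1, 3, 3, 3, 1, 1]]"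

definition C :: "int list list" where
  "C = [[1, 0, 3, 1, 2, 1, 2, 1], [3, 2, 2, 0, 0, 3, 3, 1], [3, 1, 3, 2, 3, 1, 0, 0],
        [1, 3, 0, 0, 1, 1, 2, 3], [1, 3, 0, 1, 2, 0, 1, 2], [3, 0, 0, 3, 3, 3, 2, 0],
        [1, 0, 1, 0, 2, 2, 2, 1], [3, 3, 3, 1, 3, 3, 0, 1]]"

lemma rows_B: "rows 8 B" and rows_C: "rows 8 C"
  by (simp_all add: B_def C_def)

lemma m4_vmul_B_C: "length d = 8 \<Longrightarrow> m4 (vmul 8 (vmul 8 d B) C) = m4 d"
proof -
  assume "length d = 8"
  have BC: "map m4 (map (\<lambda>r. vmul 8 r C) B) =
    [[1,0,0,0,0,0,0,0], [0,1,0,0,0,0,0,0], [0,0,1,0,0,0,0,0], [0,0,0,1,0,0,0,0],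
     [0,0,0,0,1,0,0,0], [0,0,0,0,0,1,0,0], [0,0,0,0,0,0,1,0], [0,0,0,0,0,0,0,1]]"
    by (simp add: B_def C_def vadd_def m4_def numeral_eq_Suc)
  have "m4 (vmul 8 (vmul 8 d B) C) = m4 (vmul 8 d (map (\<lambda>r. vmul 8 r C) B))"
    using rows_B rows_C by (simp add: vmul_assoc)
  also have "\<dots> = m4 (vmul 8 d (map m4 (map (\<lambda>r. vmul 8 r C) B)))"
    by (simp only: m4_vmul_matrix)
  also have "\<dots> = m4 d"
    using \<open>length d = 8\<close> unfolding BC
    by (simp add: numeral_eq_Suc length_Suc_conv, elim exE conjE) (simp add: vadd_def)
  finally show ?thesis .
qed

definition position :: "nat \<Rightarrow> nat" where
  "position k = (if k < 4 then k else k + 4)"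

definition z4_of_bits :: "bool \<Rightarrow> bool \<Rightarrow> int" where
  "z4_of_bits a b = of_bool a + 2 * of_bool b"

definition symbols :: "bool list \<Rightarrow> int list" where
  "symbols xs = map (\<lambda>k. z4_of_bits (xs ! position k) (xs ! (position k + 4))) [0..<8]"

definition G :: "bool list \<Rightarrow> bool list" where
  "G xs = concat (map gray (vmul 8 (symbols xs) B))"

lemma length_symbols [simp]: "length (symbols xs) = 8"
  by (simp add: symbols_def)

lemma G_maps_bvecs: "G ` bvecs 16 \<subseteq> bvecs 16"
  using rows_B by (auto simp: bvecs_def G_def)

lemma hamming_G:
  "hamming (G x) (G y) = lee_weight (vmul 8 (m4 (vsub (symbols x) (symbols y))) B)"
proof -
  have "hamming (G x) (G y) = lee_weight (vsub (vmul 8 (symbols x) B) (vmul 8 (symbols y) B))"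
    unfolding G_def using rows_B by (simp add: hamming_concat_gray)
  also have "\<dots> = lee_weight (m4 (vmul 8 (m4 (vsub (symbols x) (symbols y))) B))"
    using rows_B by (simp only: vmul_sub[symmetric] length_symbols m4_vmul_vector lee_weight_m4)
  finally show ?thesis by simp
qed

section \<open>Symbol differences for a split at position i\<close>

text \<open>The possible values (x_j, y_j) of bit j in x = w0u and y = w1v with length w = i.\<close>
definition split_bits :: "nat \<Rightarrow> nat \<Rightarrow> bool \<Rightarrow> bool \<Rightarrow> bool" where
  "split_bits i j a c \<longleftrightarrow> (j < i \<longrightarrow> a = c) \<and> (j = i \<longrightarrow> \<not> a \<and> c)"

definition diff_set :: "nat \<Rightarrow> nat \<Rightarrow> nat \<Rightarrow> int list" where
  "diff_set i p q = remdups [(z4_of_bits a b - z4_of_bits c d) mod 4.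
      a \<leftarrow> [False, True], b \<leftarrow> [False, True], c \<leftarrow> [False, True], d \<leftarrow> [False, True],
      split_bits i p a c \<and> split_bits i q b d]"

definition diff_sets :: "nat \<Rightarrow> int list list" where
  "diff_sets i = map (\<lambda>k. diff_set i (position k) (position k + 4)) [0..<8]"

abbreviation picks :: "int list \<Rightarrow> int list list \<Rightarrow> bool" where
  "picks d ss \<equiv> list_all2 (\<lambda>x s. x \<in> set s) d ss"

lemma symbol_diff_picks_diff_sets:
  assumes "length w = i" "length u = 15 - i" "length v = 15 - i"
  shows "picks (m4 (vsub (symbols (w @ [False] @ u)) (symbols (w @ [True] @ v)))) (diff_sets i)"
proof -
  have bits: "split_bits i j ((w @ False # u) ! j) ((w @ True # v) ! j)" for j
    using assms by (auto simp: split_bits_def nth_append)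
  have "(z4_of_bits a b - z4_of_bits c d) mod 4 \<in> set (diff_set i p q)"
    if "split_bits i p a c" "split_bits i q b d" for a b c d p q
    using that by (cases a; cases b; cases c; cases d) (auto simp: diff_set_def)
  with bits show ?thesis
    unfolding list_all2_conv_all_nth by (auto simp: diff_sets_def symbols_def)
qed

lemma picks_diff_sets_reduced: "picks d (diff_sets i) \<Longrightarrow> m4 d = d"
proof -
  have reduced: "x mod 4 = x" if "x \<in> set (diff_set i p q)" for x p q
    using that by (auto simp: diff_set_def)
  show "picks d (diff_sets i) \<Longrightarrow> m4 d = d"
    by (auto intro!: nth_equalityI reduced simp: list_all2_conv_all_nth diff_sets_def)
qed

section \<open>Certified lower bounds on Lee weights\<close>

fun enum_bound :: "nat \<Rightarrow> int list \<Rightarrow> int list list \<Rightarrow> int list list \<Rightarrow> bool" where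
  "enum_bound L acc [] _ \<longleftrightarrow> L \<le> lee_weight acc"
| "enum_bound L acc (s # ss) (r # rs) \<longleftrightarrow>
     list_all (\<lambda>x. enum_bound L (m4 (vadd acc (map ((*) x) r))) ss rs) s"
| "enum_bound L acc (s # ss) [] \<longleftrightarrow> False"

lemma enum_bound_sound:
  "enum_bound L acc ss rs \<Longrightarrow> picks d ss \<Longrightarrow> length acc = n \<Longrightarrow> rows n rs
   \<Longrightarrow> L \<le> lee_weight (vadd acc (vmul n d rs))"
proof (induction ss arbitrary: acc d rs)
  case Nil then show ?case by (simp add: vadd_zero_right)
next
  case (Cons s ss)
  then obtain x d' where d: "d = x # d'" "x \<in> set s" "picks d' ss" by (cases d) auto
  from Cons obtain r rs' where rs: "rs = r # rs'" by (cases rs) auto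
  let ?acc = "m4 (vadd acc (map ((*) x) r))"
  have "enum_bound L ?acc ss rs'" using Cons.prems d rs by (simp add: list_all_iff)
  then have "L \<le> lee_weight (vadd ?acc (vmul n d' rs'))"
    using Cons.IH d(3) Cons.prems rs by simp
  also have "\<dots> = lee_weight (m4 (vadd (vadd acc (map ((*) x) r)) (vmul n d' rs')))"
    by (metis m4_vadd_left lee_weight_m4)
  also have "\<dots> = lee_weight (vadd acc (vmul n d rs))" using d rs by (simp add: vadd_assoc)
  finally show ?case .
qed

text \<open>Pull-back criterion: if every vector of Lee weight below L (reduced mod 4) lies in Zs
  and no element of Zs comes, via C, from an admissible difference, then L is a lower bound;
  for d = z C is the only candidate preimage of z under B.\<close>
definition no_pullback :: "int list list \<Rightarrow> nat \<Rightarrow> bool" where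
  "no_pullback Zs i \<longleftrightarrow> list_all (\<lambda>z. \<not> picks (m4 (vmul 8 z C)) (diff_sets i)) Zs"

lemma no_pullback_sound:
  assumes low: "\<And>z. length z = 8 \<Longrightarrow> lee_weight z < L \<Longrightarrow> m4 z \<in> set Zs"
    and "no_pullback Zs i" and d: "picks d (diff_sets i)"
  shows "L \<le> lee_weight (vmul 8 d B)"
proof (rule ccontr)
  assume "\<not> L \<le> lee_weight (vmul 8 d B)"
  then have "m4 (vmul 8 d B) \<in> set Zs" using low rows_B by simp
  with \<open>no_pullback Zs i\<close> have "\<not> picks (m4 (vmul 8 (m4 (vmul 8 d B)) C)) (diff_sets i)"
    by (simp add: no_pullback_def list_all_iff)
  moreover have "m4 (vmul 8 (m4 (vmul 8 d B)) C) = d"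
    using d picks_diff_sets_reduced[OF d] by (simp add: m4_vmul_vector m4_vmul_B_C list_all2_lengthD diff_sets_def)
  ultimately show False using d by simp
qed

definition lee_certificate :: "nat \<Rightarrow> nat \<Rightarrow> bool" where
  "lee_certificate L i \<longleftrightarrow>
     (if L \<le> 2 then no_pullback (if L \<le> 1 then [replicate 8 0] else lee_ball1 8) i
      else enum_bound L (replicate 8 0) (diff_sets i) B)"

lemma lee_certificate_sound:
  assumes "lee_certificate L i" "picks d (diff_sets i)"
  shows "L \<le> lee_weight (vmul 8 d B)"
proof (cases "L \<le> 2")
  case True
  have "m4 z \<in> set (if L \<le> 1 then [replicate 8 0] else lee_ball1 8)"
    if "length z = 8" "lee_weight z < L" for z
    using that True m4_lee_weight_0[of z] m4_in_lee_ball1[of z] by auto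
  with True assms show ?thesis
    by (intro no_pullback_sound[of L "if L \<le> 1 then [replicate 8 0] else lee_ball1 8" i])
       (auto simp: lee_certificate_def)
next
  case False
  then have "L \<le> lee_weight (vadd (replicate 8 0) (vmul 8 d B))"
    using assms rows_B by (intro enum_bound_sound[where n = 8]) (auto simp: lee_certificate_def)
  then show ?thesis using rows_B by (simp add: vadd_zero_left)
qed

definition profile :: "nat list" where
  "profile = [1,2,2,2,2,4,4,4,6,6,6,8,8,8,8,16]"

lemma profile_certified: "list_all (\<lambda>i. lee_certificate (profile ! i) i) [0..<16]"
  by code_simp

lemma partial_distance_lower_bound:
  assumes "length w = i" "length u = 15 - i" "length v = 15 - i" "i < 16"
  shows "profile ! i \<le> hamming (G (w @ [False] @ u)) (G (w @ [True] @ v))"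
proof -
  have "lee_certificate (profile ! i) i"
    using profile_certified \<open>i < 16\<close> by (simp add: list_all_iff)
  then show ?thesis
    unfolding hamming_G by (rule lee_certificate_sound[OF _ symbol_diff_picks_diff_sets[OF assms(1-3)]])
qed

definition witnesses :: "(bool list \<times> bool list \<times> bool list) list" where
  "witnesses =
    [([], [True, False, False, False, False, False, False, False, True, True, True, True, True, True, True],
          [False, False, False, False, False, False, False, True, False, True, False, True, False, False, True]),
     ([False], [True, True, False, False, False, True, True, True, False, True, True, True, True, True],
               [False, False, True, False, False, False, True, True, False, True, False, True, False, True]),
     (replicate 2 False, [False, True, True, False, True, False, False, True, False, False, False, True, True],
                         [True, False, False, True, True, True, True, False, False, False, False, True, False]),
     (replicate 3 False, [True, True, True, False, True, True, True, True, False, True, False, False],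
                         [False, True, False, True, True, True, True, False, True, True, False, True]),
     (replicate 4 False, [False, True, True, False, False, False, False, True, False, False, True],
                         [False, False, False, False, False, False, False, True, True, False, False]),
     (replicate 5 False, [False, True, False, True, False, True, False, True, True, True],
                         [False, True, True, False, False, False, True, True, False, True]),
     (replicate 6 False, [True, False, True, False, False, False, True, False, True],
                         [False, True, True, False, True, True, True, True, True]),
     (replicate 7 False, replicate 8 False, replicate 7 False @ [True])]
    @ map (\<lambda>i. (replicate i False, replicate (15 - i) False, replicate (15 - i) False)) [8..<16]"

definition attains :: "nat \<Rightarrow> bool list \<times> bool list \<times> bool list \<Rightarrow> bool" where
  "attains i wuv = (case wuv of (w, u, v) \<Rightarrow>
     length w = i \<and> length u = 15 - i \<and> length v = 15 - i \<and>
     lee_weight (vmul 8 (m4 (vsub (symbols (w @ [False] @ u)) (symbols (w @ [True] @ v)))) B) = profile ! i)"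

lemma witnesses_attain: "list_all (\<lambda>i. attains i (witnesses ! i)) [0..<16]"
  by code_simp

lemma Dmin_G: assumes "i < 16" shows "Dmin 16 G i = profile ! i"
proof -
  have "attains i (witnesses ! i)" using witnesses_attain assms by (simp add: list_all_iff)
  moreover obtain w u v where "witnesses ! i = (w, u, v)" by (cases "witnesses ! i") auto
  ultimately have "attains i (w, u, v)" by simp
  then show ?thesis
    using assms partial_distance_lower_bound
    by (intro Dmin_eqI[OF G_maps_bvecs, of i _ w u v]) (auto simp: attains_def hamming_G)
qed

lemma G_kernel: "kernel 16 G"
proof (rule kernel_if_partial_distances_positive[OF G_maps_bvecs])
  fix w u v :: "bool list"
  assume lens: "length w < 16" "length u = 16 - length w - 1" "length v = 16 - length w - 1"
  have "0 < profile ! length w" using lens(1) by (simp add: profile_def nth_Cons')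
  also have "\<dots> \<le> hamming (G (w @ [False] @ u)) (G (w @ [True] @ v))"
    using lens by (intro partial_distance_lower_bound) auto
  finally show "0 < hamming (G (w @ [False] @ u)) (G (w @ [True] @ v))" .
qed

lemma G_not_linear: "\<not> linear_kernel 16 G"
proof -
  let ?x = "[False, False, True, False, True, False, True, False, True, True, True, False, False, False, False, True]"
  let ?y = "[False, False, False, True, True, False, False, False, True, False, False, True, False, False, True, True]"
  have "G (map2 (\<noteq>) ?x ?y) \<noteq> map2 (\<noteq>) (G ?x) (G ?y)" by code_simp
  moreover have "?x \<in> bvecs 16" "?y \<in> bvecs 16" by (simp_all add: bvecs_def)
  ultimately show ?thesis unfolding linear_kernel_def by blast
qed

section \<open>The value of the exponent\<close>

lemma ratio_less_log2_3:
  assumes "(2::nat) ^ a < 3 ^ b" "0 < b"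
  shows "real a / real b < log 2 3"
proof -
  have "(2::real) ^ a < 3 ^ b"
    using assms(1) by (metis of_nat_less_iff of_nat_numeral of_nat_power)
  then have "log 2 ((2::real) ^ a) < log 2 (3 ^ b)" by (subst log_less_cancel_iff) auto
  then have "real a < real b * log 2 3" by (simp add: log_nat_power)
  then show ?thesis using assms(2) by (simp add: divide_less_eq mult.commute)
qed

lemma log2_3_less_ratio:
  assumes "(3::nat) ^ b < 2 ^ a" "0 < b"
  shows "log 2 3 < real a / real b"
proof -
  have "(3::real) ^ b < 2 ^ a"
    using assms(1) by (metis of_nat_less_iff of_nat_numeral of_nat_power)
  then have "log 2 ((3::real) ^ b) < log 2 (2 ^ a)" by (subst log_less_cancel_iff) auto
  then have "real b * log 2 3 < real a" by (simp add: log_nat_power)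
  then show ?thesis using assms(2) by (simp add: less_divide_eq mult.commute)
qed

lemma log16_profile_sum: "(\<Sum>i<16. log 16 (real (profile ! i))) = (29 + 3 * log 2 3) / 4"
proof -
  have log16: "log 16 x = log 2 x / 4" for x :: real
    using log_base_pow[of 2 4 x] by simp
  have "log 2 (6::real) = 1 + log 2 3" using log_mult[of 2 2 3] by simp
  moreover have "log 2 (4::real) = 2" "log 2 (8::real) = 3" "log 2 (16::real) = 4"
    using log_nat_power[of 2 2 2] log_nat_power[of 2 2 3] log_nat_power[of 2 2 4] by simp_all
  ultimately show ?thesis by (simp add: lessThan_nat_numeral profile_def log16 field_simps)
qed

lemma exponent_of_profile:
  "\<bar>(1/16) * (\<Sum>i<16. log 16 (real (profile ! i))) - 0.52742\<bar> < (0.000005::real)"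
proof -
  have "real 1054 / real 665 < log 2 3" by (rule ratio_less_log2_3) simp_all
  moreover have "log 2 3 < real 485 / real 306" by (rule log2_3_less_ratio) simp_all
  ultimately show ?thesis unfolding log16_profile_sum by (simp add: abs_less_iff)
qed

theorem mainTheorem11:
  shows "\<exists>g. kernel 16 g \<and> \<not> linear_kernel 16 g
     \<and> map (Dmin 16 g) [0..<16] = [1,2,2,2,2,4,4,4,6,6,6,8,8,8,8,16]
     \<and> exponent 16 g = (1/16) * (\<Sum>i<16. log 16 (real (Dmin 16 g i)))
     \<and> exponent 16 g \<le> best_exponent 16
     \<and> \<bar>exponent 16 g - 0.52742\<bar> < 0.000005"
proof (intro exI[of _ G] conjI)
  show "kernel 16 G" by (rule G_kernel)
  show "\<not> linear_kernel 16 G" by (rule G_not_linear)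
  show "map (Dmin 16 G) [0..<16] = [1,2,2,2,2,4,4,4,6,6,6,8,8,8,8,16]"
    by (rule nth_equalityI) (simp_all add: Dmin_G profile_def)
  show exp: "exponent 16 G = (1/16) * (\<Sum>i<16. log 16 (real (Dmin 16 G i)))"
    by (simp add: exponent_def)
  show "exponent 16 G \<le> best_exponent 16"
    by (rule exponent_le_best_exponent[OF G_kernel])
  have "(\<Sum>i<16. log 16 (real (Dmin 16 G i))) = (\<Sum>i<16. log 16 (real (profile ! i)))"
    by (intro sum.cong) (auto simp: Dmin_G)
  then show "\<bar>exponent 16 G - 0.52742\<bar> < 0.000005" unfolding exp using exponent_of_profile by simp
qed

end
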